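(* Let $G$ be a finite group, let $n,m$ be positive integers with $m\mid n$, let $l\in\mathbb{Z}$ and let $\varepsilon=(\varepsilon_d)_{d\mid n}\in \mathrm{VPA}_n(G)$. Let $\chi$ be either an ordinary character of $G$ or a Brauer character of $G$ modulo a prime not dividing $n$. Then $$\mu(\zeta_m^l,\varepsilon^{n/m},\chi)=\sum_{\xi\in\mathbb{C},\ \xi^{n/m}=\zeta_m^l}\mu(\xi,\varepsilon,\chi).$$
   Context: For a positive integer $k$, $\zeta_k$ denotes a complex primitive $k$-th root of unity, chosen so that $\zeta_n^{n/m}=\zeta_m$; $\mathrm{Tr}_{F/K}$ denotes the trace of a number field extension. $\sum_{x^G}$ denotes a sum over representatives of the conjugacy classes of $G$. Brauer characters modulo a prime $p$ are taken with respect to a sufficiently large $p$-modular system. A distribution of virtual partial augmentations of order $n$ for $G$ is a list $\varepsilon=(\varepsilon_d)_{d\mid n}$ of integer-valued class functions of $G$ such that: (V1) $\sum_{x^G}\varepsilon_d(x)=1$ for each $d$; (V2) $\varepsilon_d(1)=0$ if $d\ne n$; (V3) $\varepsilon_d(x)=0$ if $|x|$ does not divide $n/d$; (V4) for every ordinary character $\chi$ of $G$ or Brauer character $\chi$ of $G$ modulo a prime not dividing $n$, and every $n$-th root of unity $\xi$, the number $\mu(\xi,\varepsilon,\chi)=\frac{1}{n}\sum_{x^G}\sum_{d\mid n}\varepsilon_d(x)\mathrm{Tr}_{\mathbb{Q}(\zeta_n^d)/\mathbb{Q}}(\chi(x)\xi^{-d})$ is a non-negative integer. $\mathrm{VPA}_n(G)$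 is the set of these lists; the same formula defines $\mu(\xi,\varepsilon,\chi)$ for any such list. For $m\mid n$, $\varepsilon^{n/m}=((\varepsilon^{n/m})_d)_{d\mid m}$ is defined by $(\varepsilon^{n/m})_d(g)=\varepsilon_{dn/m}(g)$, and $\mu(\zeta_m^l,\varepsilon^{n/m},\chi)=\frac1m\sum_{x^G}\sum_{d\mid m}(\varepsilon^{n/m})_d(x)\mathrm{Tr}_{\mathbb{Q}(\zeta_m^d)/\mathbb{Q}}(\chi(x)\zeta_m^{-ld})$. *)

theory Defs
  imports "HOL-Algebra.Multiplicative_Group" "HOL-Computational_Algebra.Polynomial" Complex_Main
begin

text \<open>Primitive k-th root of unity; with this choice zeta n ^ (n div m) = zeta m for m dvd n.\<close>
definition zeta :: "nat \<Rightarrow> complex" where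
  "zeta k = cis (2 * pi / real k)"

definition in_cyc_field :: "nat \<Rightarrow> complex \<Rightarrow> bool" where
  "in_cyc_field k a \<longleftrightarrow> (\<exists>p :: rat poly. poly (map_poly of_rat p) (zeta k) = a)"

text \<open>Trace Tr of Q(zeta k)/Q: the sum of the Galois conjugates of a, the Galois automorphisms
  being zeta k to zeta k ^ j for 0 \<le> j < k with j coprime to k. (Only meaningful for a in
  Q(zeta k); the value 0 is a junk value otherwise.)\<close>
definition cyc_trace :: "nat \<Rightarrow> complex \<Rightarrow> complex" where
  "cyc_trace k a =
     (if in_cyc_field k a then
        (let p = (SOME p :: rat poly. poly (map_poly of_rat p) (zeta k) = a)
         in \<Sum>j\<in>{j. j < k \<and> coprime j k}. poly (map_poly of_rat p) (zeta k ^ j))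
      else 0)"

definition conj_classes :: "('g, 'b) monoid_scheme \<Rightarrow> 'g set set" where
  "conj_classes G =
     (\<lambda>x. {h \<otimes>\<^bsub>G\<^esub> x \<otimes>\<^bsub>G\<^esub> inv\<^bsub>G\<^esub> h | h. h \<in> carrier G}) ` carrier G"

definition sum_classes :: "('g, 'b) monoid_scheme \<Rightarrow> ('g \<Rightarrow> 'c::comm_monoid_add) \<Rightarrow> 'c" where
  "sum_classes G f = (\<Sum>C\<in>conj_classes G. f (SOME x. x \<in> C))"

definition class_function :: "('g, 'b) monoid_scheme \<Rightarrow> ('g \<Rightarrow> 'c) \<Rightarrow> bool" where
  "class_function G f \<longleftrightarrow>
     (\<forall>g\<in>carrier G. \<forall>h\<in>carrier G. f (h \<otimes>\<^bsub>G\<^esub> g \<otimes>\<^bsub>G\<^esub> inv\<^bsub>G\<^esub> h) = f g)"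

text \<open>Matrices of size d x d are represented as functions nat => nat => _, only the entries
  with indices < d being relevant.\<close>

definition cmat_mult :: "nat \<Rightarrow> (nat \<Rightarrow> nat \<Rightarrow> complex) \<Rightarrow> (nat \<Rightarrow> nat \<Rightarrow> complex) \<Rightarrow> nat \<Rightarrow> nat \<Rightarrow> complex" where
  "cmat_mult d A B = (\<lambda>i j. \<Sum>k<d. A i k * B k j)"

definition complex_rep :: "('g, 'b) monoid_scheme \<Rightarrow> nat \<Rightarrow> ('g \<Rightarrow> nat \<Rightarrow> nat \<Rightarrow> complex) \<Rightarrow> bool" where
  "complex_rep G d \<rho> \<longleftrightarrow>
     (\<forall>i<d. \<forall>j<d. \<rho> \<one>\<^bsub>G\<^esub> i j = (if i = j then 1 else 0)) \<and>
     (\<forall>g\<in>carrier G. \<forall>h\<in>carrier G. \<forall>i<d. \<forall>j<d.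
        \<rho> (g \<otimes>\<^bsub>G\<^esub> h) i j = cmat_mult d (\<rho> g) (\<rho> h) i j)"

definition ordinary_char :: "('g, 'b) monoid_scheme \<Rightarrow> ('g \<Rightarrow> complex) \<Rightarrow> bool" where
  "ordinary_char G \<chi> \<longleftrightarrow>
     (\<exists>d \<rho>. d > 0 \<and> complex_rep G d \<rho> \<and> (\<forall>g\<in>carrier G. \<chi> g = (\<Sum>i<d. \<rho> g i i)))"

definition rmat_mult :: "('a, 'c) ring_scheme \<Rightarrow> nat \<Rightarrow> (nat \<Rightarrow> nat \<Rightarrow> 'a) \<Rightarrow> (nat \<Rightarrow> nat \<Rightarrow> 'a) \<Rightarrow> nat \<Rightarrow> nat \<Rightarrow> 'a" where
  "rmat_mult R d A B = (\<lambda>i j. \<Oplus>\<^bsub>R\<^esub> k\<in>{..<d}. A i k \<otimes>\<^bsub>R\<^esub> B k j)"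

definition rmat_carrier :: "('a, 'c) ring_scheme \<Rightarrow> nat \<Rightarrow> (nat \<Rightarrow> nat \<Rightarrow> 'a) \<Rightarrow> bool" where
  "rmat_carrier R d A \<longleftrightarrow> (\<forall>i<d. \<forall>j<d. A i j \<in> carrier R)"

definition rmat_is_one :: "('a, 'c) ring_scheme \<Rightarrow> nat \<Rightarrow> (nat \<Rightarrow> nat \<Rightarrow> 'a) \<Rightarrow> bool" where
  "rmat_is_one R d A \<longleftrightarrow> (\<forall>i<d. \<forall>j<d. A i j = (if i = j then \<one>\<^bsub>R\<^esub> else \<zero>\<^bsub>R\<^esub>))"

definition ring_rep :: "('a, 'c) ring_scheme \<Rightarrow> ('g, 'b) monoid_scheme \<Rightarrow> nat \<Rightarrow> ('g \<Rightarrow> nat \<Rightarrow> nat \<Rightarrow> 'a) \<Rightarrow> bool" where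
  "ring_rep R G d \<rho> \<longleftrightarrow>
     (\<forall>g\<in>carrier G. rmat_carrier R d (\<rho> g)) \<and>
     rmat_is_one R d (\<rho> \<one>\<^bsub>G\<^esub>) \<and>
     (\<forall>g\<in>carrier G. \<forall>h\<in>carrier G. \<forall>i<d. \<forall>j<d.
        \<rho> (g \<otimes>\<^bsub>G\<^esub> h) i j = rmat_mult R d (\<rho> g) (\<rho> h) i j)"

text \<open>The d x d matrix A over R has eigenvalues (with multiplicities) lam 0, ..., lam (d-1) in R:
  A is conjugate over R to an upper triangular matrix with diagonal lam.\<close>
definition rmat_eigenvalues :: "('a, 'c) ring_scheme \<Rightarrow> nat \<Rightarrow> (nat \<Rightarrow> nat \<Rightarrow> 'a) \<Rightarrow> (nat \<Rightarrow> 'a) \<Rightarrow> bool" where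
  "rmat_eigenvalues R d A lam \<longleftrightarrow>
     (\<exists>P Q. rmat_carrier R d P \<and> rmat_carrier R d Q \<and> rmat_is_one R d (rmat_mult R d P Q) \<and>
        (\<forall>i<d. rmat_mult R d (rmat_mult R d P A) Q i i = lam i \<and>
           (\<forall>j<i. rmat_mult R d (rmat_mult R d P A) Q i j = \<zero>\<^bsub>R\<^esub>)))"

text \<open>Brauer character modulo the prime p: the residue field F is a finite field of
  characteristic p (of a sufficiently large p-modular system; its carrier is coded as a set of
  natural numbers), theta is the identification of the (p'-order) roots of unity of F with
  complex roots of unity (an injective homomorphism from the unit group of F into C^*),
  and the Brauer character of an FG-module with matrix representation rho takes at a
  p-regular element g the value sum over the eigenvalues lam of rho g of theta lam.
  It is a function on p-regular elements; we set it to 0 on the p-singular ones.\<close>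
definition brauer_char :: "('g, 'b) monoid_scheme \<Rightarrow> nat \<Rightarrow> ('g \<Rightarrow> complex) \<Rightarrow> bool" where
  "brauer_char G p \<chi> \<longleftrightarrow> prime p \<and>
     (\<exists>(F :: nat ring) (\<theta> :: nat \<Rightarrow> complex) d \<rho>.
        field F \<and> finite (carrier F) \<and> [p] \<cdot>\<^bsub>F\<^esub> \<one>\<^bsub>F\<^esub> = \<zero>\<^bsub>F\<^esub> \<and>
        inj_on \<theta> (carrier F - {\<zero>\<^bsub>F\<^esub>}) \<and>
        (\<forall>a\<in>carrier F - {\<zero>\<^bsub>F\<^esub>}. \<forall>b\<in>carrier F - {\<zero>\<^bsub>F\<^esub>}. \<theta> (a \<otimes>\<^bsub>F\<^esub> b) = \<theta> a * \<theta> b) \<and>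
        d > 0 \<and> ring_rep F G d \<rho> \<and>
        (\<forall>g\<in>carrier G.
           if p dvd group.ord G g then \<chi> g = 0
           else (\<exists>lam. rmat_eigenvalues F d (\<rho> g) lam \<and> \<chi> g = (\<Sum>i<d. \<theta> (lam i)))))"

text \<open>mu(xi, eps, chi) for a list eps = (eps_d)_{d dvd n}, encoded as eps d g.\<close>
definition mu :: "('g, 'b) monoid_scheme \<Rightarrow> nat \<Rightarrow> (nat \<Rightarrow> 'g \<Rightarrow> int) \<Rightarrow> ('g \<Rightarrow> complex) \<Rightarrow> complex \<Rightarrow> complex" where
  "mu G n \<epsilon> \<chi> \<xi> = (1 / of_nat n) *
     sum_classes G (\<lambda>x. \<Sum>d\<in>{d. d dvd n}.
        of_int (\<epsilon> d x) * cyc_trace (n div d) (\<chi> x * inverse \<xi> ^ d))"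

definition VPA :: "('g, 'b) monoid_scheme \<Rightarrow> nat \<Rightarrow> (nat \<Rightarrow> 'g \<Rightarrow> int) \<Rightarrow> bool" where
  "VPA G n \<epsilon> \<longleftrightarrow>
     (\<forall>d. d dvd n \<longrightarrow> class_function G (\<epsilon> d)) \<and>
     (\<forall>d. d dvd n \<longrightarrow> sum_classes G (\<epsilon> d) = 1) \<and>
     (\<forall>d. d dvd n \<longrightarrow> d \<noteq> n \<longrightarrow> \<epsilon> d \<one>\<^bsub>G\<^esub> = 0) \<and>
     (\<forall>d. d dvd n \<longrightarrow> (\<forall>x\<in>carrier G. \<not> group.ord G x dvd (n div d) \<longrightarrow> \<epsilon> d x = 0)) \<and>
     (\<forall>\<xi>::complex. \<xi> ^ n = 1 \<longrightarrow>
        (\<forall>\<chi>. ordinary_char G \<chi> \<longrightarrow> mu G n \<epsilon> \<chi> \<xi> \<in> \<nat>) \<and>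
        (\<forall>p \<chi>. prime p \<and> \<not> p dvd n \<and> brauer_char G p \<chi> \<longrightarrow> mu G n \<epsilon> \<chi> \<xi> \<in> \<nat>))"

definition vpa_pow :: "nat \<Rightarrow> nat \<Rightarrow> (nat \<Rightarrow> 'g \<Rightarrow> int) \<Rightarrow> (nat \<Rightarrow> 'g \<Rightarrow> int)" where
  "vpa_pow n m \<epsilon> = (\<lambda>d g. \<epsilon> (d * (n div m)) g)"

end

theory Submission
  imports Defs "Berlekamp_Zassenhaus.Square_Free_Int_To_Square_Free_GFp"
begin

text \<open>
  Fix \<open>d | n\<close> and put \<open>k = n/d\<close>. If \<open>\<chi>(x) = Q(\<zeta>\<^sub>k)\<close> for a rational polynomial \<open>Q\<close>, then
  \<open>Tr(\<chi>(x) w) = \<Sum>\<^sub>j Q(\<zeta>\<^sub>k^j) w^j\<close> for every \<open>k\<close>-th root of unity \<open>w\<close>, with \<open>j\<close> running over the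
  units modulo \<open>k\<close>. Put \<open>q = n/m\<close> and \<open>c = \<zeta>\<^sub>m^l\<close>. Summed over the \<open>q\<close> solutions of \<open>\<xi>^q = c\<close>,
  \<open>\<xi>^(-dj)\<close> gives \<open>q c^(-dj/q)\<close> if \<open>q | dj\<close> and \<open>0\<close> otherwise; as \<open>q | dk\<close> and \<open>j\<close> is prime to
  \<open>k\<close>, the condition is \<open>q | d\<close>. So only the divisors \<open>d = d' q\<close> survive, each contributing
  \<open>q\<close> times the \<open>d'\<close>-term of \<open>\<mu>(c, \<epsilon>^(n/m), \<chi>)\<close>, and \<open>q/n = 1/m\<close>.

  The trace \<open>cyc_trace\<close> evaluates an arbitrarily chosen representing polynomial. That the
  result does not depend on the choice is the Galois invariance of rational relations among
  roots of unity, i.e.\ the irreducibility of cyclotomic polynomials, proved by Dedekind's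
  argument: for a prime \<open>p\<close> not dividing \<open>k\<close>, the minimal polynomials of \<open>w\<close> and \<open>w^p\<close> would
  otherwise be coprime factors of \<open>X^k - 1\<close>, which is separable modulo \<open>p\<close>, although
  \<open>g(X)^p \<equiv> g(X^p)\<close> modulo \<open>p\<close>.
\<close>

section \<open>Congruences modulo a prime\<close>

lemma prime_dvd_power_add_diff:
  fixes a b :: "'a::comm_ring_1"
  assumes "prime p"
  shows "of_nat p dvd (a + b) ^ p - (a ^ p + b ^ p)"
proof -
  have p0: "p > 0"
    using assms prime_gt_0_nat by blast
  have "{..p} = insert 0 (insert p {0<..<p})"
    using p0 by auto
  then have "(a + b) ^ p = b ^ p + (a ^ p + (\<Sum>k\<in>{0<..<p}. of_nat (p choose k) * a ^ k * b ^ (p - k)))"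
    using p0 by (simp add: binomial_ring)
  then have "(a + b) ^ p - (a ^ p + b ^ p) =
      (\<Sum>k\<in>{0<..<p}. of_nat (p choose k) * a ^ k * b ^ (p - k))"
    by (simp add: algebra_simps)
  also have "of_nat p dvd \<dots>"
  proof (rule dvd_sum)
    fix k assume "k \<in> {0<..<p}"
    then have "p dvd p choose k"
      using assms by (intro dvd_choose_prime) auto
    then obtain c where "p choose k = p * c" ..
    then show "of_nat p dvd of_nat (p choose k) * a ^ k * b ^ (p - k)"
      by (simp add: mult.assoc)
  qed
  finally show ?thesis .
qed

lemma prime_dvd_power_self_diff:
  fixes a :: int
  assumes p: "prime p"
  shows "int p dvd a ^ p - a"
proof (induction a rule: int_induct[where k = 0])
  case base
  show ?case
    using p prime_gt_0_nat by (simp add: zero_power)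
next
  case (step1 a)
  have "(a + 1) ^ p - (a + 1) = ((a + 1) ^ p - (a ^ p + 1 ^ p)) + (a ^ p - a)"
    by simp
  then show ?case
    using prime_dvd_power_add_diff[OF p, of a 1] step1.IH by (metis dvd_add)
next
  case (step2 a)
  have "(a - 1) ^ p - (a - 1) = (a ^ p - a) - (((a - 1) + 1) ^ p - ((a - 1) ^ p + 1 ^ p))"
    by simp
  then show ?case
    using prime_dvd_power_add_diff[OF p, of "a - 1" 1] step2.IH by (metis dvd_diff)
qed

lemma const_prime_dvd_power_pcompose_diff:
  fixes g :: "int poly"
  assumes p: "prime p"
  shows "[:int p:] dvd g ^ p - g \<circ>\<^sub>p [:0, 1:] ^ p"
proof (induction g rule: pCons_induct)
  case 0
  show ?case
    using p prime_gt_0_nat by (simp add: zero_power)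
next
  case (pCons a g)
  let ?X = "[:0, 1:] :: int poly"
  have regroup: "(u + v * w) ^ p - (u + v ^ p * z) =
      ((u + v * w) ^ p - (u ^ p + (v * w) ^ p)) + (u ^ p - u) + v ^ p * (w ^ p - z)"
    for u v w z :: "int poly"
    by (simp add: algebra_simps)
  have "pCons a g = [:a:] + ?X * g"
    by (simp flip: pCons_0_as_mult)
  moreover have "pCons a g \<circ>\<^sub>p ?X ^ p = [:a:] + ?X ^ p * (g \<circ>\<^sub>p ?X ^ p)"
    by simp
  ultimately have "pCons a g ^ p - pCons a g \<circ>\<^sub>p ?X ^ p =
      (([:a:] + ?X * g) ^ p - ([:a:] ^ p + (?X * g) ^ p)) + [:a ^ p - a:]
        + ?X ^ p * (g ^ p - g \<circ>\<^sub>p ?X ^ p)"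
    by (simp only: regroup poly_const_pow diff_pCons diff_0_right)
  moreover have "[:int p:] dvd ([:a:] + ?X * g) ^ p - ([:a:] ^ p + (?X * g) ^ p)"
    using prime_dvd_power_add_diff[OF p, of "[:a:]" "?X * g"] by (simp add: of_nat_poly)
  moreover have "[:int p:] dvd [:a ^ p - a:]"
    using prime_dvd_power_self_diff[OF p, of a] by simp
  ultimately show ?case
    using pCons.IH by (metis dvd_add dvd_mult)
qed

lemma dvd_coeff_monic_mult_iff:
  fixes f s :: "'a::comm_ring_1 poly"
  assumes "monic f" and above: "\<And>i. i > t \<Longrightarrow> c dvd coeff s i"
  shows "c dvd coeff (f * s) (degree f + t) \<longleftrightarrow> c dvd coeff s t"
proof -
  let ?d = "degree f"
  have "coeff (f * s) (?d + t) = (\<Sum>i\<le>?d + t. coeff f i * coeff s (?d + t - i))"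
    by (simp add: coeff_mult)
  also have "\<dots> = coeff s t + (\<Sum>i\<in>{..?d + t} - {?d}. coeff f i * coeff s (?d + t - i))"
    using assms(1) by (subst sum.remove[of _ ?d]) auto
  finally have eq: "coeff (f * s) (?d + t) = coeff s t + (\<Sum>i\<in>{..?d + t} - {?d}. coeff f i * coeff s (?d + t - i))" .
  have "c dvd (\<Sum>i\<in>{..?d + t} - {?d}. coeff f i * coeff s (?d + t - i))"
  proof (rule dvd_sum)
    fix i assume i: "i \<in> {..?d + t} - {?d}"
    show "c dvd coeff f i * coeff s (?d + t - i)"
    proof (cases "i < ?d")
      case True
      then show ?thesis
        using above[of "?d + t - i"] by simp
    next
      case False
      then have "coeff f i = 0"
        using i by (simp add: coeff_eq_0)
      then show ?thesis
        by simp
    qed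
  qed
  then show ?thesis
    unfolding eq by (simp add: dvd_add_left_iff)
qed

lemma const_prime_not_dvd_one_minus_monic_mult:
  fixes f s :: "int poly"
  assumes p: "prime p" and f: "monic f" "degree f > 0"
  shows "\<not> [:int p:] dvd 1 - f * s"
proof
  assume dvd: "[:int p:] dvd 1 - f * s"
  have "\<not> int p dvd 1"
    using prime_gt_1_nat[OF p] by simp
  then have "\<not> [:int p:] dvd 1"
    by (simp add: const_poly_dvd_iff)
  show False
  proof (cases "[:int p:] dvd s")
    case True
    then have "[:int p:] dvd (1 - f * s) + f * s"
      using dvd by (intro dvd_add) auto
    with \<open>\<not> [:int p:] dvd 1\<close> show False
      by simp
  next
    case False
    define T where "T = {i. \<not> int p dvd coeff s i}"
    have "T \<subseteq> {..degree s}"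
      by (auto simp: T_def intro!: le_degree)
    then have "finite T"
      by (rule finite_subset) simp
    moreover have "T \<noteq> {}"
      using False by (auto simp: T_def const_poly_dvd_iff)
    ultimately have t: "Max T \<in> T"
      by (rule Max_in)
    have above: "int p dvd coeff s i" if "i > Max T" for i
      using Max_ge[OF \<open>finite T\<close>, of i] that by (auto simp: T_def)
    have "int p dvd coeff (1 - f * s) (degree f + Max T)"
      using dvd const_poly_dvd_iff by blast
    then have "int p dvd coeff (f * s) (degree f + Max T)"
      using f(2) by simp
    with dvd_coeff_monic_mult_iff[OF f(1) above] t show False
      by (simp add: T_def)
  qed
qed

lemma diff_dvd_power_diff:
  fixes x y :: "'a::comm_ring_1"
  shows "x - y dvd x ^ n - y ^ n"
  using power_diff_sumr2[of x n y] by (rule dvdI)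

lemma X_mult_pderiv_X_pow_minus_one:
  assumes "k > 0"
  shows "[:0, 1:] * pderiv ([:0, 1:] ^ k - 1) - smult (of_nat k) ([:0, 1:] ^ k - 1) =
    [:of_nat k :: 'a::idom:]"
proof -
  let ?X = "[:0, 1:] :: 'a poly"
  have "?X * pderiv (?X ^ k - 1) = smult (of_nat k) (?X * ?X ^ (k - 1))"
    by (simp add: pderiv_diff pderiv_power pderiv_pCons)
  also have "?X * ?X ^ (k - 1) = (?X ^ k - 1) + 1"
    using assms by (simp flip: power_Suc)
  finally show ?thesis
    by (simp add: smult_diff_right)
qed

lemma X_pow_minus_one_factors_coprime_mod_prime:
  fixes f g h :: "int poly"
  assumes p: "prime p" "\<not> p dvd k" and k: "k > 0"
    and fgh: "f * g * h = [:0, 1:] ^ k - 1"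
  obtains a b where "[:int p:] dvd 1 - (g * a + f * b)"
proof -
  let ?X = "[:0, 1:] :: int poly"
  define F where "F = ?X ^ k - 1"
  have "coprime k p"
    using p prime_imp_coprime[of p k] by (simp add: ac_simps)
  then have "gcd (int k) (int p) = 1"
    by (simp add: gcd_int_def)
  then obtain u v where uv: "u * int k + v * int p = 1"
    using bezout_coefficients_fst_snd[of "int k" "int p"] by metis
  define e where "e = smult u (?X * pderiv F - smult (int k) F)"
  have "?X * pderiv F - smult (int k) F = [:int k:]"
    unfolding F_def using X_mult_pderiv_X_pow_minus_one[OF k] by simp
  then have "1 - e = [:1 - u * int k:]"
    unfolding e_def by (metis diff_pCons diff_zero one_pCons smult_pCons smult_0_right)
  also have "1 - u * int k = int p * v"
    using uv by (simp add: algebra_simps)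
  finally have "[:int p:] dvd 1 - e"
    by simp
  moreover have "e = g * (smult u (?X * pderiv f * h) - smult (u * int k) (f * h))
      + f * smult u (?X * (g * pderiv h + pderiv g * h))"
    unfolding e_def F_def fgh[symmetric]
    by (simp add: pderiv_mult algebra_simps smult_add_right smult_diff_right)
  ultimately show ?thesis
    using that by metis
qed

text \<open>
  With \<open>e = g a + f b \<equiv> 1\<close> we get \<open>1 \<equiv> e^p \<equiv> g^p a^p \<equiv> g(X^p) a^p \<equiv> 0\<close> modulo \<open>(p, f)\<close>,
  which is impossible for monic \<open>f\<close> of positive degree.
\<close>

lemma int_factor_of_X_pow_minus_one_not_dvd_pcompose:
  fixes f g h :: "int poly"
  assumes p: "prime p" "\<not> p dvd k" and k: "k > 0"
    and f: "monic f" "degree f > 0"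
    and fgh: "f * g * h = [:0, 1:] ^ k - 1"
  shows "\<not> f dvd g \<circ>\<^sub>p [:0, 1:] ^ p"
proof
  assume "f dvd g \<circ>\<^sub>p [:0, 1:] ^ p"
  then obtain w where w: "g \<circ>\<^sub>p [:0, 1:] ^ p = f * w" ..
  obtain a b where p_dvd_e: "[:int p:] dvd 1 - (g * a + f * b)"
    using X_pow_minus_one_factors_coprime_mod_prime[OF p k fgh] .
  define e where "e = g * a + f * b"
  then have "f dvd e ^ p - (g * a) ^ p"
    using diff_dvd_power_diff[of e "g * a" p] by (metis add_diff_cancel_left' dvd_mult_left)
  then obtain c where "e ^ p - (g * a) ^ p = f * c" ..
  then have c: "e ^ p = f * c + (g * a) ^ p"
    by (simp add: diff_eq_eq)
  have "1 - e dvd 1 - e ^ p"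
    using diff_dvd_power_diff[of 1 e p] by simp
  with p_dvd_e have "[:int p:] dvd 1 - e ^ p"
    unfolding e_def by (rule dvd_trans)
  moreover have "[:int p:] dvd (g ^ p - g \<circ>\<^sub>p [:0, 1:] ^ p) * a ^ p"
    using const_prime_dvd_power_pcompose_diff[OF p(1)] by simp
  ultimately have "[:int p:] dvd (1 - e ^ p) + (g ^ p - g \<circ>\<^sub>p [:0, 1:] ^ p) * a ^ p"
    by (rule dvd_add)
  also have "(1 - e ^ p) + (g ^ p - g \<circ>\<^sub>p [:0, 1:] ^ p) * a ^ p = 1 - f * (w * a ^ p + c)"
    unfolding c w by (simp add: algebra_simps)
  finally show False
    using const_prime_not_dvd_one_minus_monic_mult[OF p(1) f] by blast
qed

section \<open>Rational relations among roots of unity\<close>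

lemma monic_rat_factor_of_monic_int_poly_is_int:
  fixes u :: "rat poly" and F :: "int poly"
  assumes u: "monic u" and F: "monic F" and dvd: "u dvd of_int_poly F"
  shows "\<exists>v. u = of_int_poly v"
proof -
  obtain w where eq: "of_int_poly F = u * w"
    using dvd ..
  obtain r v where rv: "rat_to_normalized_int_poly u = (r, v)"
    by force
  obtain z where "F = v * smult (content F) z"
    using rat_to_int_factor_explicit[OF eq rv] by blast
  then have "1 = lead_coeff v * (content F * lead_coeff z)"
    using F by (metis lead_coeff_mult lead_coeff_smult)
  then have v1: "lead_coeff v = 1 \<or> lead_coeff v = -1"
    by (metis zmult_eq_1_iff)
  have u_eq: "u = smult r (of_int_poly v)" and "r > 0"
    using rat_to_normalized_int_poly[OF rv] by auto
  then have "1 = r * of_int (lead_coeff v)"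
    using u by (metis lead_coeff_smult of_int_hom.hom_lead_coeff)
  with v1 \<open>r > 0\<close> have "r = 1"
    by auto
  then show ?thesis
    using u_eq by auto
qed

lemma quotient_of_int_poly_by_monic_is_int:
  fixes w :: "rat poly" and f a :: "int poly"
  assumes f: "monic f" and eq: "of_int_poly a = of_int_poly f * w"
  shows "\<exists>v. w = of_int_poly v"
proof -
  let ?r = "of_int_poly :: int poly \<Rightarrow> rat poly"
  obtain q r where qr: "pseudo_divmod a f = (q, r)"
    by force
  have f0: "f \<noteq> 0"
    using f by auto
  have "a = f * q + r"
    using pseudo_divmod(1)[OF f0 qr] f by simp
  then have eqr: "?r f * (w - ?r q) = ?r r"
    using eq by (simp add: hom_distribs right_diff_distrib)
  have "w = ?r q"
  proof (rule ccontr)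
    assume "w \<noteq> ?r q"
    then have "degree (?r r) = degree f + degree (w - ?r q)" and "r \<noteq> 0"
      using f0 eqr[symmetric] by (auto simp: degree_mult_eq)
    then show False
      using pseudo_divmod(2)[OF f0 qr] by simp
  qed
  then show ?thesis ..
qed

interpretation of_rat_poly_hom: map_poly_inj_idom_hom "of_rat :: rat \<Rightarrow> complex" ..

definition rat_minpoly :: "complex \<Rightarrow> rat poly \<Rightarrow> bool" where
  "rat_minpoly z f \<longleftrightarrow> monic f \<and> poly (map_poly of_rat f) z = 0 \<and>
     (\<forall>r. poly (map_poly of_rat r) z = 0 \<longrightarrow> f dvd r)"

lemma rat_poly_dvd_root:
  assumes "f dvd r" and "poly (map_poly of_rat f) (z::complex) = 0"
  shows "poly (map_poly of_rat r) z = 0"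
  using assms by (auto simp: hom_distribs elim!: dvdE)

lemma rat_minpoly_exists:
  assumes "r \<noteq> 0" and "poly (map_poly of_rat r) z = 0"
  shows "\<exists>f. rat_minpoly z f"
proof -
  define P where "P s \<longleftrightarrow> s \<noteq> 0 \<and> poly (map_poly of_rat s) z = 0" for s :: "rat poly"
  obtain f0 where "P f0" and least: "\<And>s. P s \<Longrightarrow> degree f0 \<le> degree s"
    using ex_has_least_nat[of P r degree] assms by (auto simp: P_def)
  define f where "f = smult (inverse (lead_coeff f0)) f0"
  have f: "monic f" "degree f = degree f0" "poly (map_poly of_rat f) z = 0"
    using \<open>P f0\<close> by (auto simp: f_def P_def hom_distribs)
  have "f dvd s" if "poly (map_poly of_rat s) z = 0" for s
  proof (rule ccontr)
    assume "\<not> f dvd s"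
    then have "s mod f \<noteq> 0"
      by (simp add: mod_eq_0_iff_dvd)
    moreover have "poly (map_poly of_rat (s mod f)) z = 0"
      using that f(3) by (simp add: hom_distribs flip: minus_div_mult_eq_mod)
    ultimately have "degree f0 \<le> degree (s mod f)"
      by (intro least) (simp add: P_def)
    moreover have "degree (s mod f) < degree f"
      using degree_mod_less[of f s] \<open>s mod f \<noteq> 0\<close> f(1) by fastforce
    ultimately show False
      using f(2) by simp
  qed
  then show ?thesis
    using f unfolding rat_minpoly_def by blast
qed

lemma rat_minpoly_degree_pos:
  assumes "rat_minpoly z f"
  shows "degree f > 0"
  using assms monic_degree_0[of f] by (auto simp: rat_minpoly_def)

lemma rat_minpoly_irreducible:
  assumes f: "rat_minpoly z f"
  shows "irreducible f"
proof (rule irreducibleI)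
  show "f \<noteq> 0" and "\<not> is_unit f"
    using rat_minpoly_degree_pos[OF f] by (auto simp: is_unit_iff_degree)
next
  have "f \<noteq> 0"
    using f by (auto simp: rat_minpoly_def)
  have unit: "is_unit v" if "f = u * v" and "f dvd u" for u v
  proof -
    obtain c where "u = f * c"
      using \<open>f dvd u\<close> ..
    with that(1) have "f * (c * v) = f * 1"
      by (simp add: mult.assoc)
    with \<open>f \<noteq> 0\<close> have "c * v = 1"
      by simp
    then show ?thesis
      by (metis dvd_triv_right)
  qed
  fix a b assume fab: "f = a * b"
  then have "poly (map_poly of_rat a) z = 0 \<or> poly (map_poly of_rat b) z = 0"
    using f by (simp add: rat_minpoly_def hom_distribs)
  then have "f dvd a \<or> f dvd b"
    using f by (auto simp: rat_minpoly_def)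
  then show "is_unit a \<or> is_unit b"
    using unit[of a b] unit[of b a] fab by (auto simp: mult.commute)
qed

lemma rat_minpoly_coprime:
  assumes f: "rat_minpoly z f" and g: "rat_minpoly y g"
    and "poly (map_poly of_rat f) y \<noteq> 0"
  shows "coprime f g"
proof (rule prime_elem_imp_coprime)
  show "prime_elem f"
    using rat_minpoly_irreducible[OF f] by (rule irreducible_imp_prime_elem)
  show "\<not> f dvd g"
  proof
    assume "f dvd g"
    then obtain t where t: "g = f * t" ..
    then have "is_unit t"
      using rat_minpoly_irreducible[OF f] rat_minpoly_irreducible[OF g]
      by (metis irreducibleD irreducible_not_unit)
    then have "g dvd f"
      using t by simp
    then show False
      using g assms(3) rat_poly_dvd_root by (auto simp: rat_minpoly_def)
  qed
qed

lemma monic_X_pow_minus_one: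
  assumes "k > 0"
  shows "monic ([:0, 1:] ^ k - 1 :: 'a::{comm_ring_1, ring_no_zero_divisors} poly)"
proof -
  have "([:0, 1:] ^ k - 1 :: 'a poly) = monom 1 k + (-1)"
    by (simp add: monom_altdef)
  moreover have "degree (monom (1::'a) k + (-1)) = k"
    using assms by (subst degree_add_eq_left) (auto simp: degree_monom_eq)
  ultimately show ?thesis
    using assms by simp
qed

lemma rat_factor_of_X_pow_minus_one_not_dvd_pcompose:
  fixes f g h :: "rat poly"
  assumes p: "prime p" "\<not> p dvd k" and k: "k > 0"
    and f: "monic f" "degree f > 0" and g: "monic g"
    and fgh: "f * g * h = [:0, 1:] ^ k - 1"
  shows "\<not> f dvd g \<circ>\<^sub>p [:0, 1:] ^ p"
proof
  assume "f dvd g \<circ>\<^sub>p [:0, 1:] ^ p"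
  then obtain w where w: "g \<circ>\<^sub>p [:0, 1:] ^ p = f * w" ..
  define F where "F = ([:0, 1:] ^ k - 1 :: int poly)"
  have F: "monic F" "of_int_poly F = f * g * h"
    using monic_X_pow_minus_one[OF k] by (simp_all add: F_def fgh hom_distribs)
  have "monic h"
    using F f(1) g by (metis monic_factor monic_mult of_int_hom.hom_lead_coeff of_int_1)
  have "f dvd of_int_poly F" "g dvd of_int_poly F" "h dvd of_int_poly F"
    unfolding F(2) by (auto intro: dvd_mult dvd_mult2)
  then obtain fi gi hi where ints: "f = of_int_poly fi" "g = of_int_poly gi" "h = of_int_poly hi"
    using monic_rat_factor_of_monic_int_poly_is_int[OF _ F(1)] f(1) g \<open>monic h\<close> by meson
  have fi: "monic fi" "degree fi > 0"
    using f ints(1) by simp_all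
  have "of_int_poly (gi \<circ>\<^sub>p [:0, 1:] ^ p) = of_int_poly fi * w"
    using w ints by (simp add: of_int_hom.map_poly_pcompose hom_distribs)
  then obtain wi where "w = of_int_poly wi"
    using quotient_of_int_poly_by_monic_is_int[OF fi(1)] by blast
  then have "of_int_poly (gi \<circ>\<^sub>p [:0, 1:] ^ p) = (of_int_poly (fi * wi) :: rat poly)"
    using w ints by (simp add: of_int_hom.map_poly_pcompose hom_distribs)
  then have wi: "gi \<circ>\<^sub>p [:0, 1:] ^ p = fi * wi"
    by (simp only: of_int_poly_hom.eq_iff)
  have "of_int_poly (fi * gi * hi) = (of_int_poly F :: rat poly)"
    using F(2) ints by (simp add: hom_distribs)
  then have "fi * gi * hi = [:0, 1:] ^ k - 1"
    unfolding F_def by (simp only: of_int_poly_hom.eq_iff)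
  from int_factor_of_X_pow_minus_one_not_dvd_pcompose[OF p k fi this] show False
    unfolding wi by simp
qed

lemma rat_poly_root_unity_pow_prime:
  fixes w :: complex and r :: "rat poly"
  assumes k: "k > 0" "w ^ k = 1" and p: "prime p" "\<not> p dvd k"
    and r: "poly (map_poly of_rat r) w = 0"
  shows "poly (map_poly of_rat r) (w ^ p) = 0"
proof -
  define F where "F = ([:0, 1:] ^ k - 1 :: rat poly)"
  have F_root: "poly (map_poly of_rat F) y = 0" if "y ^ k = 1" for y :: complex
    using that by (simp add: F_def hom_distribs)
  have "poly F 0 \<noteq> 0"
    using k(1) by (simp add: F_def zero_power)
  then have "F \<noteq> 0"
    by auto
  have "(w ^ p) ^ k = (w ^ k) ^ p"
    by (simp only: mult.commute flip: power_mult)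
  then have wp: "(w ^ p) ^ k = 1"
    using k(2) by simp
  obtain f where f: "rat_minpoly w f"
    using rat_minpoly_exists[OF \<open>F \<noteq> 0\<close> F_root[OF k(2)]] ..
  obtain g where g: "rat_minpoly (w ^ p) g"
    using rat_minpoly_exists[OF \<open>F \<noteq> 0\<close> F_root[OF wp]] ..
  have "poly (map_poly of_rat f) (w ^ p) = 0"
  proof (rule ccontr)
    assume "poly (map_poly of_rat f) (w ^ p) \<noteq> 0"
    then have "coprime f g"
      by (rule rat_minpoly_coprime[OF f g])
    moreover have "f dvd F" and "g dvd F"
      using f g F_root k(2) wp by (auto simp: rat_minpoly_def)
    ultimately have "f * g dvd F"
      by (intro divides_mult)
    then obtain h where "F = f * g * h" ..
    then have "f * g * h = [:0, 1:] ^ k - 1"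
      by (simp add: F_def)
    moreover have "f dvd g \<circ>\<^sub>p [:0, 1:] ^ p"
      using f g by (simp add: rat_minpoly_def of_rat_hom.map_poly_pcompose hom_distribs
          poly_pcompose)
    ultimately show False
      using rat_factor_of_X_pow_minus_one_not_dvd_pcompose[OF p k(1)] f g
        rat_minpoly_degree_pos[OF f] by (auto simp: rat_minpoly_def)
  qed
  then show ?thesis
    using f r rat_poly_dvd_root by (auto simp: rat_minpoly_def)
qed

lemma rat_poly_root_unity_pow_coprime:
  fixes w :: complex and r :: "rat poly"
  assumes k: "k > 0" "w ^ k = 1" and r: "poly (map_poly of_rat r) w = 0"
    and j: "j > 0" "coprime j k"
  shows "poly (map_poly of_rat r) (w ^ j) = 0"
  using j
proof (induction j rule: less_induct)
  case (less j)
  show ?case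
  proof (cases "j = 1")
    case True
    then show ?thesis
      using r by simp
  next
    case False
    then obtain p i where p: "prime p" and j_eq: "j = p * i"
      using prime_factor_nat by (metis dvdE)
    then have "i > 0" "i < j" "coprime i k" "\<not> p dvd k"
      using less.prems p prime_gt_1_nat[OF p] by (auto simp: coprime_commute prime_imp_coprime_nat
          dest: coprime_common_divisor_nat)
    moreover have "(w ^ i) ^ k = (w ^ k) ^ i"
      by (simp only: mult.commute flip: power_mult)
    ultimately have "poly (map_poly of_rat r) ((w ^ i) ^ p) = 0"
      using rat_poly_root_unity_pow_prime[OF k(1) _ p(1)] less.IH k(2) by simp
    moreover have "(w ^ i) ^ p = w ^ j"
      by (simp only: j_eq mult.commute flip: power_mult)
    ultimately show ?thesis
      by simp
  qed
qed

section \<open>Traces in cyclotomic fields\<close>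

lemma zeta_pow: "zeta k ^ j = cis (2 * pi * real j / real k)"
  unfolding zeta_def by (simp add: DeMoivre field_simps)

lemma zeta_pow_eq_1_iff:
  assumes "k > 0"
  shows "zeta k ^ t = 1 \<longleftrightarrow> k dvd t"
proof -
  have "zeta k ^ k = 1"
    using assms by (simp add: zeta_pow complex_eq_iff)
  moreover have "zeta k ^ t = (zeta k ^ k) ^ (t div k) * zeta k ^ (t mod k)"
    by (simp flip: power_mult power_add)
  ultimately have "zeta k ^ t = zeta k ^ (t mod k)"
    by simp
  also have "\<dots> = 1 \<longleftrightarrow> t mod k = 0"
    using inj_onD[OF bij_betw_imp_inj_on[OF bij_betw_roots_unity[OF assms]], of "t mod k" 0] assms
    by (auto simp: zeta_pow)
  finally show ?thesis
    by (simp add: dvd_eq_mod_eq_0)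
qed

lemma root_unity_eq_zeta_pow:
  assumes "k > 0" and "(w::complex) ^ k = 1"
  obtains s where "w = zeta k ^ s"
  using bij_betw_imp_surj_on[OF bij_betw_roots_unity[OF assms(1)]] assms(2)
  by (force simp: zeta_pow)

definition units_mod :: "nat \<Rightarrow> nat set" where
  "units_mod k = {j. j < k \<and> coprime j k}"

lemma cyc_trace_eq:
  assumes k: "k > 0" and P: "poly (map_poly of_rat P) (zeta k) = a"
  shows "cyc_trace k a = (\<Sum>j\<in>units_mod k. poly (map_poly of_rat P) (zeta k ^ j))"
proof -
  have ex: "\<exists>P. poly (map_poly of_rat P) (zeta k) = a"
    using P by blast
  define Q where "Q = (SOME Q :: rat poly. poly (map_poly of_rat Q) (zeta k) = a)"
  have "poly (map_poly of_rat (Q - P)) (zeta k) = 0"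
    using someI_ex[OF ex] P by (simp add: Q_def hom_distribs)
  then have conjugates: "poly (map_poly of_rat (Q - P)) (zeta k ^ j) = 0" if "j \<in> units_mod k" for j
  proof (cases "j = 0")
    case True
    then have "zeta k ^ j = zeta k"
      using that zeta_pow_eq_1_iff[OF k, of 1] by (simp add: units_mod_def)
    then show ?thesis
      using \<open>poly (map_poly of_rat (Q - P)) (zeta k) = 0\<close> by simp
  next
    case False
    then show ?thesis
      using that rat_poly_root_unity_pow_coprime[OF k _ \<open>poly _ (zeta k) = 0\<close>] k
      by (simp add: units_mod_def zeta_pow_eq_1_iff)
  qed
  then have "cyc_trace k a = (\<Sum>j\<in>units_mod k. poly (map_poly of_rat Q) (zeta k ^ j))"
    using ex unfolding cyc_trace_def in_cyc_field_def Q_def units_mod_def by simp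
  also have "\<dots> = (\<Sum>j\<in>units_mod k. poly (map_poly of_rat P) (zeta k ^ j))"
    using conjugates by (intro sum.cong) (simp_all add: hom_distribs)
  finally show ?thesis .
qed

lemma cyc_trace_mult_root_unity:
  assumes k: "k > 0" and P: "poly (map_poly of_rat P) (zeta k) = a" and w: "w ^ k = 1"
  shows "cyc_trace k (a * w) = (\<Sum>j\<in>units_mod k. poly (map_poly of_rat P) (zeta k ^ j) * w ^ j)"
proof -
  obtain s where s: "w = zeta k ^ s"
    using root_unity_eq_zeta_pow[OF k w] .
  have "poly (map_poly of_rat (P * monom 1 s)) (zeta k) = a * w"
    using P s by (simp add: hom_distribs poly_monom)
  then have "cyc_trace k (a * w) =
      (\<Sum>j\<in>units_mod k. poly (map_poly of_rat (P * monom 1 s)) (zeta k ^ j))"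
    by (rule cyc_trace_eq[OF k])
  also have "\<dots> = (\<Sum>j\<in>units_mod k. poly (map_poly of_rat P) (zeta k ^ j) * w ^ j)"
    by (intro sum.cong) (simp_all add: s hom_distribs poly_monom mult.commute flip: power_mult)
  finally show ?thesis .
qed

lemma in_cyc_field_mult_root_unity:
  assumes "k > 0" and "in_cyc_field k a" and "w ^ k = 1"
  shows "in_cyc_field k (a * w)"
proof -
  obtain P where P: "poly (map_poly of_rat P) (zeta k) = a"
    using assms(2) by (auto simp: in_cyc_field_def)
  obtain s where "w = zeta k ^ s"
    using root_unity_eq_zeta_pow[OF assms(1,3)] .
  then have "poly (map_poly of_rat (P * monom 1 s)) (zeta k) = a * w"
    using P by (simp add: hom_distribs poly_monom)
  then show ?thesis
    unfolding in_cyc_field_def by blast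
qed

lemma cyc_trace_mult_root_unity_not_in_field:
  assumes k: "k > 0" and a: "\<not> in_cyc_field k a" and w: "w ^ k = 1"
  shows "cyc_trace k (a * w) = 0"
proof -
  have "w \<noteq> 0"
    using w k by (auto simp: zero_power)
  moreover have "inverse w ^ k = 1"
    using w by (simp add: power_inverse)
  ultimately have "\<not> in_cyc_field k (a * w)"
    using in_cyc_field_mult_root_unity[OF k, of "a * w" "inverse w"] a by (auto simp: field_simps)
  then show ?thesis
    by (simp add: cyc_trace_def)
qed

section \<open>Sums over roots\<close>

lemma sum_roots_unity_power:
  assumes q: "q > 0"
  shows "(\<Sum>z\<in>{z::complex. z ^ q = 1}. z ^ t) = (if q dvd t then of_nat q else 0)"
proof -
  have "(\<Sum>z\<in>{z::complex. z ^ q = 1}. z ^ t) = (\<Sum>s<q. (zeta q ^ t) ^ s)"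
    by (subst sum.reindex_bij_betw[OF bij_betw_roots_unity[OF q], symmetric],
        unfold zeta_pow[symmetric]) (simp add: mult.commute flip: power_mult)
  also have "\<dots> = (if q dvd t then of_nat q else 0)"
  proof (cases "q dvd t")
    case True
    then have "zeta q ^ t = 1"
      using zeta_pow_eq_1_iff[OF q] by simp
    then show ?thesis
      using True by simp
  next
    case False
    have "(zeta q ^ t) ^ q = (zeta q ^ q) ^ t"
      by (simp only: mult.commute flip: power_mult)
    then have "(zeta q ^ t) ^ q = 1"
      using zeta_pow_eq_1_iff[OF q, of q] by simp
    moreover have "zeta q ^ t \<noteq> 1"
      using False zeta_pow_eq_1_iff[OF q] by simp
    ultimately show ?thesis
      using False by (simp add: geometric_sum)
  qed
  finally show ?thesis .
qed

lemma sum_nth_roots_power: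
  assumes c: "(c::complex) \<noteq> 0" and q: "q > 0"
  shows "(\<Sum>z\<in>{z. z ^ q = c}. z ^ t) = (if q dvd t then of_nat q * c ^ (t div q) else 0)"
proof -
  define r where "r = root q (norm c) * cis (Arg c / q)"
  have bij: "bij_betw (\<lambda>z. r * z) {z. z ^ q = 1} {z. z ^ q = c}"
    unfolding r_def by (rule bij_betw_nth_root_unity[OF c q])
  then have "r ^ q = c"
    by (metis (mono_tags) bij_betw_apply mem_Collect_eq mult_1_right power_one)
  have "(\<Sum>z\<in>{z. z ^ q = c}. z ^ t) = r ^ t * (\<Sum>z\<in>{z. z ^ q = 1}. z ^ t)"
    by (simp add: sum.reindex_bij_betw[OF bij, symmetric] sum_distrib_left power_mult_distrib)
  also have "\<dots> = (if q dvd t then of_nat q * c ^ (t div q) else 0)"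
    using \<open>r ^ q = c\<close> q by (auto simp: sum_roots_unity_power[OF q] elim!: dvdE simp flip: power_mult)
  finally show ?thesis .
qed

lemma sum_nth_roots_inverse_power:
  assumes c: "(c::complex) \<noteq> 0" and q: "q > 0"
  shows "(\<Sum>\<xi>\<in>{\<xi>. \<xi> ^ q = c}. inverse \<xi> ^ t) =
    (if q dvd t then of_nat q * inverse c ^ (t div q) else 0)"
proof -
  have "(\<Sum>\<xi>\<in>{\<xi>. \<xi> ^ q = c}. inverse \<xi> ^ t) = (\<Sum>z\<in>{z. z ^ q = inverse c}. z ^ t)"
    by (rule sum.reindex_bij_witness[of _ inverse inverse]) (auto simp: power_inverse)
  then show ?thesis
    using sum_nth_roots_power[of "inverse c" q t] c q by simp
qed

lemma dvd_mult_coprime_iff: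
  fixes q e j k :: nat
  assumes "coprime j k" and "q dvd e * k"
  shows "q dvd e * j \<longleftrightarrow> q dvd e"
proof
  assume "q dvd e * j"
  with assms(2) have "q dvd gcd (e * j) (e * k)"
    by simp
  also have "gcd (e * j) (e * k) = e"
    using assms(1) by (simp add: gcd_mult_distrib_nat[symmetric])
  finally show "q dvd e" .
qed simp

lemma inverse_power_root_unity:
  fixes \<xi> c :: "'a::field"
  assumes "\<xi> ^ q = c" and "c ^ m = 1" and "e * k = m * q"
  shows "(inverse \<xi> ^ e) ^ k = 1"
proof -
  have "(inverse \<xi> ^ e) ^ k = inverse ((\<xi> ^ q) ^ m)"
    by (simp only: power_inverse assms(3) mult.commute flip: power_mult)
  then show ?thesis
    using assms(1,2) by simp
qed

lemma sum_nth_roots_cyc_trace: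
  fixes a c :: complex
  assumes q: "q > 0" and k: "k > 0" and m: "m > 0" and ekmq: "e * k = m * q" and c: "c ^ m = 1"
  shows "(\<Sum>\<xi>\<in>{\<xi>. \<xi> ^ q = c}. cyc_trace k (a * inverse \<xi> ^ e)) =
    (if q dvd e then of_nat q * cyc_trace k (a * inverse c ^ (e div q)) else 0)"
proof -
  let ?S = "{\<xi>. \<xi> ^ q = c}"
  have "c \<noteq> 0"
    using c m by (auto simp: zero_power)
  have root: "(inverse \<xi> ^ e) ^ k = 1" if "\<xi> \<in> ?S" for \<xi>
    using inverse_power_root_unity[of \<xi> q c m e k] that c ekmq by simp
  have root_c: "(inverse c ^ (e div q)) ^ k = 1" if "q dvd e"
    using inverse_power_root_unity[of c 1 c m "e div q" k] that c ekmq q by (auto elim!: dvdE)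
  show ?thesis
  proof (cases "in_cyc_field k a")
    case False
    then show ?thesis
      using cyc_trace_mult_root_unity_not_in_field[OF k False] root root_c by simp
  next
    case True
    then obtain P where P: "poly (map_poly of_rat P) (zeta k) = a"
      by (auto simp: in_cyc_field_def)
    let ?\<sigma> = "\<lambda>j. poly (map_poly of_rat P) (zeta k ^ j)"
    have "(\<Sum>\<xi>\<in>?S. cyc_trace k (a * inverse \<xi> ^ e)) =
        (\<Sum>\<xi>\<in>?S. \<Sum>j\<in>units_mod k. ?\<sigma> j * inverse \<xi> ^ (e * j))"
      using cyc_trace_mult_root_unity[OF k P root] by (simp add: power_mult)
    also have "\<dots> = (\<Sum>j\<in>units_mod k. ?\<sigma> j * (\<Sum>\<xi>\<in>?S. inverse \<xi> ^ (e * j)))"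
      by (subst sum.swap) (simp add: sum_distrib_left)
    also have "\<dots> = (\<Sum>j\<in>units_mod k. ?\<sigma> j *
        (if q dvd e then of_nat q * inverse c ^ (e * j div q) else 0))"
      using dvd_mult_coprime_iff[of _ k q e] ekmq
      by (intro sum.cong) (simp_all add: sum_nth_roots_inverse_power[OF \<open>c \<noteq> 0\<close> q] units_mod_def)
    also have "\<dots> = (if q dvd e then of_nat q * cyc_trace k (a * inverse c ^ (e div q)) else 0)"
    proof (cases "q dvd e")
      case True
      then have "inverse c ^ (e * j div q) = (inverse c ^ (e div q)) ^ j" for j
        by (auto elim!: dvdE simp: power_mult)
      then show ?thesis
        using True by (simp add: cyc_trace_mult_root_unity[OF k P root_c] sum_distrib_left mult_ac)
    qed simp
    finally show ?thesis .
  qed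
qed

section \<open>Summing \<open>\<mu>\<close> over roots\<close>

lemma sum_divisors_multiples:
  fixes F :: "nat \<Rightarrow> 'a::comm_monoid_add"
  assumes n: "n = m * q" and "m > 0" and q: "q > 0"
  shows "(\<Sum>e\<in>{e. e dvd n}. if q dvd e then F e else 0) = (\<Sum>d\<in>{d. d dvd m}. F (d * q))"
proof -
  have "finite {e. e dvd n}"
    using assms by simp
  then have "(\<Sum>e\<in>{e. e dvd n}. if q dvd e then F e else 0) = (\<Sum>e\<in>{e. e dvd n \<and> q dvd e}. F e)"
    by (simp add: sum.inter_filter[symmetric])
  also have "\<dots> = (\<Sum>d\<in>{d. d dvd m}. F (d * q))"
    by (rule sum.reindex_bij_witness[of _ "\<lambda>d. d * q" "\<lambda>e. e div q"])
      (use q in \<open>auto simp: n elim!: dvdE\<close>)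
  finally show ?thesis .
qed

lemma sum_classes_sum: "(\<Sum>a\<in>A. sum_classes G (f a)) = sum_classes G (\<lambda>x. \<Sum>a\<in>A. f a x)"
  unfolding sum_classes_def by (rule sum.swap)

lemma sum_classes_mult:
  fixes f :: "'g \<Rightarrow> 'c::semiring_0"
  shows "sum_classes G (\<lambda>x. c * f x) = c * sum_classes G f"
  by (simp add: sum_classes_def sum_distrib_left)

lemma sum_mu_nth_roots:
  assumes n: "n = m * q" and m: "m > 0" and q: "q > 0" and c: "c ^ m = 1"
  shows "(\<Sum>\<xi>\<in>{\<xi>. \<xi> ^ q = c}. mu G n \<epsilon> \<chi> \<xi>) = mu G m (\<lambda>d. \<epsilon> (d * q)) \<chi> c"
proof -
  let ?S = "{\<xi>. \<xi> ^ q = c}"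
  let ?R = "\<lambda>x. \<Sum>d\<in>{d. d dvd m}. of_int (\<epsilon> (d * q) x) * cyc_trace (m div d) (\<chi> x * inverse c ^ d)"
  have roots: "(\<Sum>\<xi>\<in>?S. cyc_trace (n div e) (a * inverse \<xi> ^ e)) =
      (if q dvd e then of_nat q * cyc_trace (n div e) (a * inverse c ^ (e div q)) else 0)"
    if "e dvd n" for e a
    using that n m q by (intro sum_nth_roots_cyc_trace[OF q _ m _ c]) (auto elim!: dvdE intro!: gr0I split: if_splits)
  have inner: "(\<Sum>\<xi>\<in>?S. \<Sum>e\<in>{e. e dvd n}. of_int (\<epsilon> e x) * cyc_trace (n div e) (\<chi> x * inverse \<xi> ^ e))
      = of_nat q * ?R x" for x
  proof -
    have "(\<Sum>\<xi>\<in>?S. \<Sum>e\<in>{e. e dvd n}. of_int (\<epsilon> e x) * cyc_trace (n div e) (\<chi> x * inverse \<xi> ^ e))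
        = (\<Sum>e\<in>{e. e dvd n}. if q dvd e then of_int (\<epsilon> e x) * (of_nat q *
            cyc_trace (n div e) (\<chi> x * inverse c ^ (e div q))) else 0)"
      by (subst sum.swap) (auto simp: roots simp flip: sum_distrib_left intro!: sum.cong)
    also have "\<dots> = (\<Sum>d\<in>{d. d dvd m}. of_int (\<epsilon> (d * q) x) * (of_nat q *
        cyc_trace (n div (d * q)) (\<chi> x * inverse c ^ (d * q div q))))"
      by (rule sum_divisors_multiples[OF n m q])
    also have "\<dots> = of_nat q * ?R x"
      using q by (simp add: n sum_distrib_left mult_ac)
    finally show ?thesis .
  qed
  have "(\<Sum>\<xi>\<in>?S. mu G n \<epsilon> \<chi> \<xi>) = 1 / of_nat n * (\<Sum>\<xi>\<in>?S. sum_classes G (\<lambda>x.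
      \<Sum>e\<in>{e. e dvd n}. of_int (\<epsilon> e x) * cyc_trace (n div e) (\<chi> x * inverse \<xi> ^ e)))"
    unfolding mu_def by (rule sum_distrib_left[symmetric])
  also have "\<dots> = 1 / of_nat n * (of_nat q * sum_classes G ?R)"
    by (simp only: sum_classes_sum inner sum_classes_mult)
  also have "\<dots> = mu G m (\<lambda>d. \<epsilon> (d * q)) \<chi> c"
    using m q by (simp add: mu_def n)
  finally show ?thesis .
qed

theorem lemma3p2:
  fixes G :: "'g monoid" and n m :: nat and l :: int
    and \<epsilon> :: "nat \<Rightarrow> 'g \<Rightarrow> int" and \<chi> :: "'g \<Rightarrow> complex"
  assumes "group G" and "finite (carrier G)"
    and "n > 0" and "m > 0" and "m dvd n"
    and "VPA G n \<epsilon>"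
    and "ordinary_char G \<chi> \<or> (\<exists>p. prime p \<and> \<not> p dvd n \<and> brauer_char G p \<chi>)"
  shows "mu G m (vpa_pow n m \<epsilon>) \<chi> (zeta m powi l) =
         (\<Sum>\<xi>\<in>{\<xi>::complex. \<xi> ^ (n div m) = zeta m powi l}. mu G n \<epsilon> \<chi> \<xi>)"
proof -
  have n: "n = m * (n div m)"
    using \<open>m dvd n\<close> by simp
  then have q: "n div m > 0"
    using \<open>n > 0\<close> by (cases "n div m") auto
  have "zeta m ^ m = 1"
    using zeta_pow_eq_1_iff[OF \<open>m > 0\<close>] by simp
  have "(zeta m powi l) ^ m = (zeta m powi int m) powi l"
    by (simp only: power_int_power' power_int_mult[symmetric] mult.commute)
  also have "\<dots> = 1"
    using \<open>zeta m ^ m = 1\<close> by simp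
  finally have "(zeta m powi l) ^ m = 1" .
  from sum_mu_nth_roots[OF n \<open>m > 0\<close> q this] show ?thesis
    unfolding vpa_pow_def by (rule sym)
qed

end
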